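(* Let $I=(N,O,\succsim)$ be a general instance, $p$ a generalized random matching and $p'$ its associated random matching for the associated instance $I'$. Then $p$ is ex-post weakly stable if and only if $p'$ is ex-post weakly stable and $p$ is non-wasteful (i.e., $p'$ respects non-wastefulness).
   Context: General instance: $N=\{1,\dots,n\}$ agents, $O=\{o_1,\dots,o_m\}$ objects ($m,n\ge1$ arbitrary), $\emptyset$ the null object; each agent $i$ has a weak order $\succsim_i$ over $O\cup\{\emptyset\}$, each object $o$ a weak order $\succsim_o$ over $N\cup\{\emptyset\}$, with either $o\succ_i\emptyset$ or $\emptyset\succ_i o$, and either $i\succ_o\emptyset$ or $\emptyset\succ_o i$. $(i,o)$ is acceptable if $o\succ_i\emptyset$ and $i\succ_o\emptyset$. A generalized random matching is an $n\times m$ nonnegative matrix with row and column sums $\le1$; deterministic if entries are in $\{0,1\}$. $p$ is individually rational if $p(i,o)=0$ whenever $\emptyset\succ_i o$ or $\emptyset\succ_o i$; non-wasteful if there is no acceptable $(i,o)$ with $\sum_{o':o'\succsim_i o}p(i,o')<1$ and $\sum_j p(j,o)<1$. A generalized deterministic matching is weakly stable if it is individually rational and there is no acceptable $(i,o)$ with $\sum_{o':o'\succsim_i o}p(i,o')=0$ and $\sum_{j:j\succsim_o i}p(j,o)=0$. A generalized random matching $p$ is ex-post weakly stable if it is non-wasteful and can be written as $\sum_{j}\lambda_jP_j$ ($\lambda_j\in(0,1]$, $\sum\lambda_j=1$) with every $P_j$ a weakly stable generalized deterministic matching. Associated instance: $D=\{d_1,\dots,d_m\}$, $\Phi=\{\phi_1,\dots,\phi_n\}$,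 $N'=N\cup D$, $O'=O\cup\Phi$, with weak orders (blocks best to worst, consecutive blocks strict): $i\in N$: objects acceptable to $i$ by $\succsim_i$, $\phi_i$, $\phi_k$ ($k\ne i$) in increasing index, objects unacceptable to $i$ by $\succsim_i$; $o_j$: agents acceptable to $o_j$ by $\succsim_{o_j}$, $d_j$, $d_k$ ($k\ne j$) in increasing index, agents unacceptable to $o_j$ by $\succsim_{o_j}$; $d_j$: $o_j$, other objects of $O$ in increasing index, then null objects with $\phi_k\succsim'_{d_j}\phi_l$ iff $k\succsim_{o_j}l$; $\phi_i$: $i$, other agents of $N$ in increasing index, then dummies with $d_k\succsim'_{\phi_i}d_l$ iff $o_k\succsim_i o_l$. Associated random matching: $p'(i,o_j)=p(i,o_j)$, $p'(d_j,\phi_i)=p(i,o_j)$, $p'(i,\phi_i)=1-\sum_o p(i,o)$, $p'(d_j,o_j)=1-\sum_i p(i,o_j)$, other entries $0$ (an $(n+m)\times(n+m)$ bistochastic matrix). For $I'$: a deterministic matching $q$ (bistochastic $\{0,1\}$-matrix) is weakly stable if there are no $a,b\in N'$, $c,c'\in O'$ with $q(a,c')=1$, $q(b,c)=1$, $c\succ'_a c'$, $a\succ'_c b$; a random matching (bistochastic matrix) is ex-post weakly stable if it is a convex combination with positive weights of weakly stable deterministic matchings. *)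

theory Defs
  imports Complex_Main
begin

text \<open>
Agents are the natural numbers 1..n, objects o_1..o_m are the natural numbers 1..m.
The null object / "unmatched" option is None.
Pa i x y  means  x \<succsim>_i y  (x, y :: nat option, None = null object).
Po j x y  means  x \<succsim>_{o_j} y  (x, y :: nat option, None = null).
A (generalized random) matching is p :: nat \<Rightarrow> nat \<Rightarrow> real, p i j = p(i, o_j),
only its entries with 1 \<le> i \<le> n, 1 \<le> j \<le> m are relevant.

Associated instance: N' = Inl ` {1..n} (agents) \<union> Inr ` {1..m} (dummies d_j),
O' = Inl ` {1..m} (objects o_j) \<union> Inr ` {1..n} (null objects phi_i).
\<close>

definition weak_order_on :: "'a set \<Rightarrow> ('a \<Rightarrow> 'a \<Rightarrow> bool) \<Rightarrow> bool" where
  "weak_order_on A R \<longleftrightarrow>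
     (\<forall>x\<in>A. \<forall>y\<in>A. R x y \<or> R y x) \<and>
     (\<forall>x\<in>A. \<forall>y\<in>A. \<forall>z\<in>A. R x y \<longrightarrow> R y z \<longrightarrow> R x z)"

definition strict :: "('a \<Rightarrow> 'a \<Rightarrow> bool) \<Rightarrow> 'a \<Rightarrow> 'a \<Rightarrow> bool" where
  "strict R x y \<longleftrightarrow> R x y \<and> \<not> R y x"

definition general_instance ::
  "nat \<Rightarrow> nat \<Rightarrow> (nat \<Rightarrow> nat option \<Rightarrow> nat option \<Rightarrow> bool)
       \<Rightarrow> (nat \<Rightarrow> nat option \<Rightarrow> nat option \<Rightarrow> bool) \<Rightarrow> bool" where
  "general_instance n m Pa Po \<longleftrightarrow> n \<ge> 1 \<and> m \<ge> 1 \<and>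
     (\<forall>i\<in>{1..n}. weak_order_on (insert None (Some ` {1..m})) (Pa i) \<and>
        (\<forall>ob\<in>{1..m}. strict (Pa i) (Some ob) None \<or> strict (Pa i) None (Some ob))) \<and>
     (\<forall>j\<in>{1..m}. weak_order_on (insert None (Some ` {1..n})) (Po j) \<and>
        (\<forall>i\<in>{1..n}. strict (Po j) (Some i) None \<or> strict (Po j) None (Some i)))"

definition acceptable ::
  "(nat \<Rightarrow> nat option \<Rightarrow> nat option \<Rightarrow> bool)
       \<Rightarrow> (nat \<Rightarrow> nat option \<Rightarrow> nat option \<Rightarrow> bool) \<Rightarrow> nat \<Rightarrow> nat \<Rightarrow> bool" where
  "acceptable Pa Po i ob \<longleftrightarrow> strict (Pa i) (Some ob) None \<and> strict (Po ob) (Some i) None"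

definition gen_random_matching :: "nat \<Rightarrow> nat \<Rightarrow> (nat \<Rightarrow> nat \<Rightarrow> real) \<Rightarrow> bool" where
  "gen_random_matching n m p \<longleftrightarrow>
     (\<forall>i\<in>{1..n}. \<forall>ob\<in>{1..m}. p i ob \<ge> 0) \<and>
     (\<forall>i\<in>{1..n}. (\<Sum>ob\<in>{1..m}. p i ob) \<le> 1) \<and>
     (\<forall>ob\<in>{1..m}. (\<Sum>i\<in>{1..n}. p i ob) \<le> 1)"

definition gen_det_matching :: "nat \<Rightarrow> nat \<Rightarrow> (nat \<Rightarrow> nat \<Rightarrow> real) \<Rightarrow> bool" where
  "gen_det_matching n m P \<longleftrightarrow> gen_random_matching n m P \<and>
     (\<forall>i\<in>{1..n}. \<forall>ob\<in>{1..m}. P i ob = 0 \<or> P i ob = 1)"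

definition indiv_rational ::
  "nat \<Rightarrow> nat \<Rightarrow> (nat \<Rightarrow> nat option \<Rightarrow> nat option \<Rightarrow> bool)
       \<Rightarrow> (nat \<Rightarrow> nat option \<Rightarrow> nat option \<Rightarrow> bool) \<Rightarrow> (nat \<Rightarrow> nat \<Rightarrow> real) \<Rightarrow> bool" where
  "indiv_rational n m Pa Po p \<longleftrightarrow>
     (\<forall>i\<in>{1..n}. \<forall>ob\<in>{1..m}.
        (strict (Pa i) None (Some ob) \<or> strict (Po ob) None (Some i)) \<longrightarrow> p i ob = 0)"

definition non_wasteful ::
  "nat \<Rightarrow> nat \<Rightarrow> (nat \<Rightarrow> nat option \<Rightarrow> nat option \<Rightarrow> bool)
       \<Rightarrow> (nat \<Rightarrow> nat option \<Rightarrow> nat option \<Rightarrow> bool) \<Rightarrow> (nat \<Rightarrow> nat \<Rightarrow> real) \<Rightarrow> bool" where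
  "non_wasteful n m Pa Po p \<longleftrightarrow>
     \<not> (\<exists>i\<in>{1..n}. \<exists>ob\<in>{1..m}. acceptable Pa Po i ob \<and>
          (\<Sum>ob'\<in>{ob'\<in>{1..m}. Pa i (Some ob') (Some ob)}. p i ob') < 1 \<and>
          (\<Sum>j\<in>{1..n}. p j ob) < 1)"

definition gen_weakly_stable ::
  "nat \<Rightarrow> nat \<Rightarrow> (nat \<Rightarrow> nat option \<Rightarrow> nat option \<Rightarrow> bool)
       \<Rightarrow> (nat \<Rightarrow> nat option \<Rightarrow> nat option \<Rightarrow> bool) \<Rightarrow> (nat \<Rightarrow> nat \<Rightarrow> real) \<Rightarrow> bool" where
  "gen_weakly_stable n m Pa Po P \<longleftrightarrow> gen_det_matching n m P \<and>
     indiv_rational n m Pa Po P \<and>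
     \<not> (\<exists>i\<in>{1..n}. \<exists>ob\<in>{1..m}. acceptable Pa Po i ob \<and>
          (\<Sum>ob'\<in>{ob'\<in>{1..m}. Pa i (Some ob') (Some ob)}. P i ob') = 0 \<and>
          (\<Sum>j\<in>{j\<in>{1..n}. Po ob (Some j) (Some i)}. P j ob) = 0)"

definition gen_ex_post_weakly_stable ::
  "nat \<Rightarrow> nat \<Rightarrow> (nat \<Rightarrow> nat option \<Rightarrow> nat option \<Rightarrow> bool)
       \<Rightarrow> (nat \<Rightarrow> nat option \<Rightarrow> nat option \<Rightarrow> bool) \<Rightarrow> (nat \<Rightarrow> nat \<Rightarrow> real) \<Rightarrow> bool" where
  "gen_ex_post_weakly_stable n m Pa Po p \<longleftrightarrow> non_wasteful n m Pa Po p \<and>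
     (\<exists>(K::nat) (lam::nat \<Rightarrow> real) (Ps::nat \<Rightarrow> nat \<Rightarrow> nat \<Rightarrow> real).
        (\<forall>k<K. 0 < lam k \<and> lam k \<le> 1 \<and> gen_weakly_stable n m Pa Po (Ps k)) \<and>
        (\<Sum>k<K. lam k) = 1 \<and>
        (\<forall>i\<in>{1..n}. \<forall>ob\<in>{1..m}. p i ob = (\<Sum>k<K. lam k * Ps k i ob)))"

definition agents' :: "nat \<Rightarrow> nat \<Rightarrow> (nat + nat) set" where
  "agents' n m = Inl ` {1..n} \<union> Inr ` {1..m}"

definition objects' :: "nat \<Rightarrow> nat \<Rightarrow> (nat + nat) set" where
  "objects' n m = Inl ` {1..m} \<union> Inr ` {1..n}"

definition first_rank :: "nat \<Rightarrow> nat \<Rightarrow> nat" where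
  "first_rank a k = (if k = a then 0 else k)"

text \<open>Weak preference of an agent of N' over O': assoc_apref Pa Po a c c' means c \<succsim>'_a c'.\<close>
definition assoc_apref ::
  "(nat \<Rightarrow> nat option \<Rightarrow> nat option \<Rightarrow> bool) \<Rightarrow> (nat \<Rightarrow> nat option \<Rightarrow> nat option \<Rightarrow> bool)
     \<Rightarrow> nat + nat \<Rightarrow> nat + nat \<Rightarrow> nat + nat \<Rightarrow> bool" where
  "assoc_apref Pa Po a c c' =
     (case a of
        Inl i \<Rightarrow>
          (let acc = (\<lambda>ob. strict (Pa i) (Some ob) None) in
           case (c, c') of
             (Inl ob, Inl ob') \<Rightarrow> (if acc ob = acc ob' then Pa i (Some ob) (Some ob') else acc ob)
           | (Inl ob, Inr k) \<Rightarrow> acc ob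
           | (Inr k, Inl ob) \<Rightarrow> \<not> acc ob
           | (Inr k, Inr l) \<Rightarrow> first_rank i k \<le> first_rank i l)
      | Inr j \<Rightarrow>
          (case (c, c') of
             (Inl ob, Inl ob') \<Rightarrow> first_rank j ob \<le> first_rank j ob'
           | (Inl ob, Inr k) \<Rightarrow> True
           | (Inr k, Inl ob) \<Rightarrow> False
           | (Inr k, Inr l) \<Rightarrow> Po j (Some k) (Some l)))"

text \<open>Weak preference of an object of O' over N': assoc_opref Pa Po c a b means a \<succsim>'_c b.\<close>
definition assoc_opref ::
  "(nat \<Rightarrow> nat option \<Rightarrow> nat option \<Rightarrow> bool) \<Rightarrow> (nat \<Rightarrow> nat option \<Rightarrow> nat option \<Rightarrow> bool)
     \<Rightarrow> nat + nat \<Rightarrow> nat + nat \<Rightarrow> nat + nat \<Rightarrow> bool" where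
  "assoc_opref Pa Po c a b =
     (case c of
        Inl j \<Rightarrow>
          (let acc = (\<lambda>i. strict (Po j) (Some i) None) in
           case (a, b) of
             (Inl i, Inl i') \<Rightarrow> (if acc i = acc i' then Po j (Some i) (Some i') else acc i)
           | (Inl i, Inr k) \<Rightarrow> acc i
           | (Inr k, Inl i) \<Rightarrow> \<not> acc i
           | (Inr k, Inr l) \<Rightarrow> first_rank j k \<le> first_rank j l)
      | Inr i \<Rightarrow>
          (case (a, b) of
             (Inl x, Inl y) \<Rightarrow> first_rank i x \<le> first_rank i y
           | (Inl x, Inr k) \<Rightarrow> True
           | (Inr k, Inl x) \<Rightarrow> False
           | (Inr k, Inr l) \<Rightarrow> Pa i (Some k) (Some l)))"

definition assoc_matching ::
  "nat \<Rightarrow> nat \<Rightarrow> (nat \<Rightarrow> nat \<Rightarrow> real) \<Rightarrow> nat + nat \<Rightarrow> nat + nat \<Rightarrow> real" where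
  "assoc_matching n m p a c =
     (case (a, c) of
        (Inl i, Inl ob) \<Rightarrow> p i ob
      | (Inr j, Inr i) \<Rightarrow> p i j
      | (Inl i, Inr k) \<Rightarrow> (if k = i then 1 - (\<Sum>ob\<in>{1..m}. p i ob) else 0)
      | (Inr j, Inl ob) \<Rightarrow> (if ob = j then 1 - (\<Sum>i\<in>{1..n}. p i j) else 0))"

definition bistochastic' :: "nat \<Rightarrow> nat \<Rightarrow> (nat + nat \<Rightarrow> nat + nat \<Rightarrow> real) \<Rightarrow> bool" where
  "bistochastic' n m q \<longleftrightarrow>
     (\<forall>a\<in>agents' n m. \<forall>c\<in>objects' n m. q a c \<ge> 0) \<and>
     (\<forall>a\<in>agents' n m. (\<Sum>c\<in>objects' n m. q a c) = 1) \<and>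
     (\<forall>c\<in>objects' n m. (\<Sum>a\<in>agents' n m. q a c) = 1)"

definition det_matching' :: "nat \<Rightarrow> nat \<Rightarrow> (nat + nat \<Rightarrow> nat + nat \<Rightarrow> real) \<Rightarrow> bool" where
  "det_matching' n m q \<longleftrightarrow> bistochastic' n m q \<and>
     (\<forall>a\<in>agents' n m. \<forall>c\<in>objects' n m. q a c = 0 \<or> q a c = 1)"

definition weakly_stable' ::
  "nat \<Rightarrow> nat \<Rightarrow> (nat \<Rightarrow> nat option \<Rightarrow> nat option \<Rightarrow> bool)
     \<Rightarrow> (nat \<Rightarrow> nat option \<Rightarrow> nat option \<Rightarrow> bool) \<Rightarrow> (nat + nat \<Rightarrow> nat + nat \<Rightarrow> real) \<Rightarrow> bool" where
  "weakly_stable' n m Pa Po q \<longleftrightarrow> det_matching' n m q \<and>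
     \<not> (\<exists>a\<in>agents' n m. \<exists>b\<in>agents' n m. \<exists>c\<in>objects' n m. \<exists>c'\<in>objects' n m.
          q a c' = 1 \<and> q b c = 1 \<and>
          strict (assoc_apref Pa Po a) c c' \<and> strict (assoc_opref Pa Po c) a b)"

definition ex_post_weakly_stable' ::
  "nat \<Rightarrow> nat \<Rightarrow> (nat \<Rightarrow> nat option \<Rightarrow> nat option \<Rightarrow> bool)
     \<Rightarrow> (nat \<Rightarrow> nat option \<Rightarrow> nat option \<Rightarrow> bool) \<Rightarrow> (nat + nat \<Rightarrow> nat + nat \<Rightarrow> real) \<Rightarrow> bool" where
  "ex_post_weakly_stable' n m Pa Po q \<longleftrightarrow> bistochastic' n m q \<and>
     (\<exists>(K::nat) (lam::nat \<Rightarrow> real) (Qs::nat \<Rightarrow> nat + nat \<Rightarrow> nat + nat \<Rightarrow> real).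
        (\<forall>k<K. 0 < lam k \<and> weakly_stable' n m Pa Po (Qs k)) \<and>
        (\<Sum>k<K. lam k) = 1 \<and>
        (\<forall>a\<in>agents' n m. \<forall>c\<in>objects' n m. q a c = (\<Sum>k<K. lam k * Qs k a c)))"

end

theory Submission
  imports Defs
begin

text \<open>
  The map from a generalized matching to its associated matching is affine, and restricting a
  matching of the associated instance to agents \<times> objects inverts it on deterministic matchings;
  so it suffices to show that these two maps preserve weak stability of deterministic matchings.
  In the associated instance an agent i ranks \<phi>_i first among the null objects, an object o_j
  ranks d_j first among the dummies, d_j ranks o_j first and \<phi>_i ranks i first, while acceptable
  real partners beat all null ones.  Hence a blocking pair of the associated matching is either a
  real pair (i, o_j), or a pair (d_j, \<phi>_k) with d_j holding \<phi>_i and \<phi>_k held by d_j',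
  which is exactly the blocking pair (k, o_j) seen through the dummies.  Conversely, a weakly
  stable deterministic matching of the associated instance restricts to an individually rational
  one, since otherwise (i, \<phi>_i) or (d_j, o_j) blocks, and to one without blocking pairs.
  Non-wastefulness appears verbatim on both sides.
\<close>

lemma sum_zero_one_eq_card:
  fixes f :: "'a \<Rightarrow> real"
  assumes "finite A" "\<forall>x\<in>A. f x = 0 \<or> f x = 1"
  shows "sum f A = real (card {x\<in>A. f x = 1})"
proof -
  have "sum f A = (\<Sum>x\<in>A. if f x = 1 then 1 else 0)"
    using assms(2) by (intro sum.cong) auto
  also have "\<dots> = real (card {x\<in>A. f x = 1})"
    using assms(1) by (simp add: sum.If_cases Int_def conj_commute)
  finally show ?thesis .
qed

lemma sum_zero_one_le_1_unique:
  fixes f :: "'a \<Rightarrow> real"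
  assumes "finite A" "\<forall>x\<in>A. f x = 0 \<or> f x = 1" "sum f A \<le> 1"
    and "x \<in> A" "y \<in> A" "f x = 1" "f y = 1"
  shows "x = y"
proof -
  have "card {x\<in>A. f x = 1} \<le> 1"
    using assms(3) sum_zero_one_eq_card[OF assms(1,2)] by simp
  then show ?thesis
    using assms(4-7) by (auto simp: card_le_Suc0_iff_eq[of "{x\<in>A. f x = 1}"] assms(1))
qed

lemma sum_zero_one_le_1_cases:
  fixes f :: "'a \<Rightarrow> real"
  assumes "finite A" "\<forall>x\<in>A. f x = 0 \<or> f x = 1" "sum f A \<le> 1"
  shows "sum f A = 0 \<or> sum f A = 1"
  using assms(3) unfolding sum_zero_one_eq_card[OF assms(1,2)]
  by (cases "card {x\<in>A. f x = 1}") auto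

lemma sum_zero_one_eq_1_obtain:
  fixes f :: "'a \<Rightarrow> real"
  assumes "finite A" "\<forall>x\<in>A. f x = 0 \<or> f x = 1" "sum f A = 1"
  obtains x where "x \<in> A" "f x = 1"
  using assms(3) unfolding sum_zero_one_eq_card[OF assms(1,2)]
  by (metis (mono_tags, lifting) card.empty empty_Collect_eq of_nat_0 zero_neq_one)

lemma positive_weight_le_1:
  fixes lam :: "nat \<Rightarrow> real"
  assumes "\<forall>k<K. 0 < lam k" "(\<Sum>k<K. lam k) = 1" "k < K"
  shows "lam k \<le> 1"
  using member_le_sum[of k "{..<K}" lam] assms by (simp add: less_imp_le)

lemma weak_order_on_strict_trans:
  assumes "weak_order_on A R" "x \<in> A" "y \<in> A" "z \<in> A" "strict R x y" "strict R y z"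
  shows "strict R x z"
  using assms unfolding weak_order_on_def strict_def by blast

lemma general_instance_agent_order:
  "general_instance n m Pa Po \<Longrightarrow> i \<in> {1..n} \<Longrightarrow> weak_order_on (insert None (Some ` {1..m})) (Pa i)"
  unfolding general_instance_def by blast

lemma general_instance_object_order:
  "general_instance n m Pa Po \<Longrightarrow> ob \<in> {1..m} \<Longrightarrow> weak_order_on (insert None (Some ` {1..n})) (Po ob)"
  unfolding general_instance_def by blast

lemma general_instance_agent_acceptable_or_not:
  "general_instance n m Pa Po \<Longrightarrow> i \<in> {1..n} \<Longrightarrow> ob \<in> {1..m} \<Longrightarrow>
     strict (Pa i) (Some ob) None \<or> strict (Pa i) None (Some ob)"
  unfolding general_instance_def by blast

lemma general_instance_object_acceptable_or_not:
  "general_instance n m Pa Po \<Longrightarrow> ob \<in> {1..m} \<Longrightarrow> i \<in> {1..n} \<Longrightarrow>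
     strict (Po ob) (Some i) None \<or> strict (Po ob) None (Some i)"
  unfolding general_instance_def by blast

lemma agents'_cases [consumes 1, case_names agent dummy]:
  assumes "a \<in> agents' n m"
  obtains (agent) i where "a = Inl i" "i \<in> {1..n}" | (dummy) j where "a = Inr j" "j \<in> {1..m}"
  using assms unfolding agents'_def by blast

lemma objects'_cases [consumes 1, case_names object null]:
  assumes "c \<in> objects' n m"
  obtains (object) ob where "c = Inl ob" "ob \<in> {1..m}" | (null) k where "c = Inr k" "k \<in> {1..n}"
  using assms unfolding objects'_def by blast

lemma mem_agents' [simp]:
  "Inl i \<in> agents' n m \<longleftrightarrow> i \<in> {1..n}" "Inr j \<in> agents' n m \<longleftrightarrow> j \<in> {1..m}"
  unfolding agents'_def by auto

lemma mem_objects' [simp]: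
  "Inl ob \<in> objects' n m \<longleftrightarrow> ob \<in> {1..m}" "Inr k \<in> objects' n m \<longleftrightarrow> k \<in> {1..n}"
  unfolding objects'_def by auto

lemma finite_agents' [simp]: "finite (agents' n m)"
  unfolding agents'_def by simp

lemma finite_objects' [simp]: "finite (objects' n m)"
  unfolding objects'_def by simp

lemma sum_agents':
  "sum f (agents' n m) = (\<Sum>i\<in>{1..n}. f (Inl i)) + (\<Sum>j\<in>{1..m}. f (Inr j))"
  unfolding agents'_def by (subst sum.union_disjoint) (auto simp: sum.reindex)

lemma sum_objects':
  "sum f (objects' n m) = (\<Sum>ob\<in>{1..m}. f (Inl ob)) + (\<Sum>k\<in>{1..n}. f (Inr k))"
  unfolding objects'_def by (subst sum.union_disjoint) (auto simp: sum.reindex)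

lemma first_rank_self [simp]: "first_rank a a = 0"
  by (simp add: first_rank_def)

lemma assoc_apref_simps [simp]:
  "assoc_apref Pa Po (Inl i) (Inl ob) (Inl ob') =
     (if strict (Pa i) (Some ob) None = strict (Pa i) (Some ob') None
      then Pa i (Some ob) (Some ob') else strict (Pa i) (Some ob) None)"
  "assoc_apref Pa Po (Inl i) (Inl ob) (Inr k) = strict (Pa i) (Some ob) None"
  "assoc_apref Pa Po (Inl i) (Inr k) (Inl ob) = (\<not> strict (Pa i) (Some ob) None)"
  "assoc_apref Pa Po (Inl i) (Inr k) (Inr l) = (first_rank i k \<le> first_rank i l)"
  "assoc_apref Pa Po (Inr j) (Inl ob) (Inl ob') = (first_rank j ob \<le> first_rank j ob')"
  "assoc_apref Pa Po (Inr j) (Inl ob) (Inr k)"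
  "\<not> assoc_apref Pa Po (Inr j) (Inr k) (Inl ob)"
  "assoc_apref Pa Po (Inr j) (Inr k) (Inr l) = Po j (Some k) (Some l)"
  by (simp_all add: assoc_apref_def)

lemma assoc_opref_simps [simp]:
  "assoc_opref Pa Po (Inl ob) (Inl i) (Inl i') =
     (if strict (Po ob) (Some i) None = strict (Po ob) (Some i') None
      then Po ob (Some i) (Some i') else strict (Po ob) (Some i) None)"
  "assoc_opref Pa Po (Inl ob) (Inl i) (Inr j) = strict (Po ob) (Some i) None"
  "assoc_opref Pa Po (Inl ob) (Inr j) (Inl i) = (\<not> strict (Po ob) (Some i) None)"
  "assoc_opref Pa Po (Inl ob) (Inr j) (Inr l) = (first_rank ob j \<le> first_rank ob l)"
  "assoc_opref Pa Po (Inr k) (Inl i) (Inl i') = (first_rank k i \<le> first_rank k i')"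
  "assoc_opref Pa Po (Inr k) (Inl i) (Inr j)"
  "\<not> assoc_opref Pa Po (Inr k) (Inr j) (Inl i)"
  "assoc_opref Pa Po (Inr k) (Inr j) (Inr l) = Pa k (Some j) (Some l)"
  by (simp_all add: assoc_opref_def)

lemma assoc_matching_simps [simp]:
  "assoc_matching n m p (Inl i) (Inl ob) = p i ob"
  "assoc_matching n m p (Inr j) (Inr i) = p i j"
  "assoc_matching n m p (Inl i) (Inr k) = (if k = i then 1 - (\<Sum>ob\<in>{1..m}. p i ob) else 0)"
  "assoc_matching n m p (Inr j) (Inl ob) = (if ob = j then 1 - (\<Sum>i\<in>{1..n}. p i j) else 0)"
  by (simp_all add: assoc_matching_def)

lemma bistochastic'_assoc_matching:
  assumes "gen_random_matching n m p"
  shows "bistochastic' n m (assoc_matching n m p)"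
  using assms unfolding bistochastic'_def gen_random_matching_def
  by (auto simp: sum_objects' sum_agents' elim!: agents'_cases objects'_cases)

lemma assoc_matching_convex_combination:
  fixes K :: nat
  assumes lam: "(\<Sum>k<K. lam k) = 1"
    and p: "\<forall>i\<in>{1..n}. \<forall>ob\<in>{1..m}. p i ob = (\<Sum>k<K. lam k * Ps k i ob)"
    and "a \<in> agents' n m" "c \<in> objects' n m"
  shows "assoc_matching n m p a c = (\<Sum>k<K. lam k * assoc_matching n m (Ps k) a c)"
proof -
  have one_minus: "1 - (\<Sum>x\<in>B. \<Sum>k<K. lam k * g k x) = (\<Sum>k<K. lam k * (1 - (\<Sum>x\<in>B. g k x)))"
    for B and g :: "nat \<Rightarrow> nat \<Rightarrow> real"
    by (simp add: right_diff_distrib sum_subtractf sum_distrib_left lam sum.swap[of _ B])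
  from assms(3,4) show ?thesis
    by (elim agents'_cases objects'_cases) (auto simp: p one_minus[symmetric])
qed

locale gen_weakly_stable_matching =
  fixes n m :: nat
    and Pa Po :: "nat \<Rightarrow> nat option \<Rightarrow> nat option \<Rightarrow> bool"
    and P :: "nat \<Rightarrow> nat \<Rightarrow> real"
  assumes gen_instance: "general_instance n m Pa Po"
    and stable: "gen_weakly_stable n m Pa Po P"
begin

abbreviation q :: "nat + nat \<Rightarrow> nat + nat \<Rightarrow> real" where
  "q \<equiv> assoc_matching n m P"

definition desires_object :: "nat \<Rightarrow> nat \<Rightarrow> bool" where
  "desires_object i ob \<longleftrightarrow> strict (Pa i) (Some ob) None \<and>
     (\<forall>ob'\<in>{1..m}. P i ob' = 1 \<longrightarrow> \<not> Pa i (Some ob') (Some ob))"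

definition desires_agent :: "nat \<Rightarrow> nat \<Rightarrow> bool" where
  "desires_agent ob i \<longleftrightarrow> strict (Po ob) (Some i) None \<and>
     (\<forall>j\<in>{1..n}. P j ob = 1 \<longrightarrow> \<not> Po ob (Some j) (Some i))"

lemma random_matching: "gen_random_matching n m P"
  using stable unfolding gen_weakly_stable_def gen_det_matching_def by blast

lemma entry_zero_one: "\<forall>i\<in>{1..n}. \<forall>ob\<in>{1..m}. P i ob = 0 \<or> P i ob = 1"
  using stable unfolding gen_weakly_stable_def gen_det_matching_def by blast

lemma row_sum_le_1: "i \<in> {1..n} \<Longrightarrow> (\<Sum>ob\<in>{1..m}. P i ob) \<le> 1"
  using random_matching unfolding gen_random_matching_def by blast

lemma col_sum_le_1: "ob \<in> {1..m} \<Longrightarrow> (\<Sum>i\<in>{1..n}. P i ob) \<le> 1"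
  using random_matching unfolding gen_random_matching_def by blast

lemma matched_object_unique:
  "\<lbrakk>i \<in> {1..n}; ob \<in> {1..m}; ob' \<in> {1..m}; P i ob = 1; P i ob' = 1\<rbrakk> \<Longrightarrow> ob' = ob"
  by (rule sum_zero_one_le_1_unique[of "{1..m}" "P i"]) (use entry_zero_one row_sum_le_1 in auto)

lemma matched_agent_unique:
  "\<lbrakk>i \<in> {1..n}; i' \<in> {1..n}; ob \<in> {1..m}; P i ob = 1; P i' ob = 1\<rbrakk> \<Longrightarrow> i' = i"
  by (rule sum_zero_one_le_1_unique[of "{1..n}" "\<lambda>i. P i ob"]) (use entry_zero_one col_sum_le_1 in auto)

lemma matched_acceptable:
  assumes "i \<in> {1..n}" "ob \<in> {1..m}" "P i ob = 1"
  shows "acceptable Pa Po i ob"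
proof -
  have "\<not> strict (Pa i) None (Some ob)" "\<not> strict (Po ob) None (Some i)"
    using stable assms unfolding gen_weakly_stable_def indiv_rational_def by auto
  then show ?thesis
    using general_instance_agent_acceptable_or_not[OF gen_instance assms(1,2)]
      general_instance_object_acceptable_or_not[OF gen_instance assms(2,1)]
    unfolding acceptable_def by blast
qed

lemma no_mutual_desire:
  assumes "i \<in> {1..n}" "ob \<in> {1..m}" "desires_object i ob" "desires_agent ob i"
  shows False
proof -
  have "(\<Sum>ob'\<in>{ob'\<in>{1..m}. Pa i (Some ob') (Some ob)}. P i ob') = 0"
    using assms(1,3) entry_zero_one unfolding desires_object_def by (intro sum.neutral) force
  moreover have "(\<Sum>j\<in>{j\<in>{1..n}. Po ob (Some j) (Some i)}. P j ob) = 0"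
    using assms(2,4) entry_zero_one unfolding desires_agent_def by (intro sum.neutral) force
  moreover have "acceptable Pa Po i ob"
    using assms(3,4) unfolding desires_object_def desires_agent_def acceptable_def by blast
  ultimately show False
    using stable assms(1,2) unfolding gen_weakly_stable_def by blast
qed

lemma assoc_null_partner:
  assumes "i \<in> {1..n}" "q (Inl i) (Inr k) = 1"
  shows "k = i" "\<forall>ob\<in>{1..m}. P i ob = 0"
proof -
  show "k = i" using assms(2) by (simp split: if_splits)
  then have "(\<Sum>ob\<in>{1..m}. P i ob) = 0" using assms(2) by simp
  then show "\<forall>ob\<in>{1..m}. P i ob = 0"
    using random_matching assms(1) sum_nonneg_eq_0_iff[of "{1..m}" "P i"]
    unfolding gen_random_matching_def by auto
qed

lemma assoc_dummy_partner:
  assumes "j \<in> {1..m}" "q (Inr j) (Inl ob) = 1"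
  shows "ob = j" "\<forall>i\<in>{1..n}. P i j = 0"
proof -
  show "ob = j" using assms(2) by (simp split: if_splits)
  then have "(\<Sum>i\<in>{1..n}. P i j) = 0" using assms(2) by simp
  then show "\<forall>i\<in>{1..n}. P i j = 0"
    using random_matching assms(1) sum_nonneg_eq_0_iff[of "{1..n}" "\<lambda>i. P i j"]
    unfolding gen_random_matching_def by auto
qed

lemma det_matching'_assoc: "det_matching' n m q"
proof -
  have rows: "(\<Sum>ob\<in>{1..m}. P i ob) = 0 \<or> (\<Sum>ob\<in>{1..m}. P i ob) = 1" if "i \<in> {1..n}" for i
    using sum_zero_one_le_1_cases[of "{1..m}" "P i"] entry_zero_one row_sum_le_1 that by auto
  have cols: "(\<Sum>i\<in>{1..n}. P i ob) = 0 \<or> (\<Sum>i\<in>{1..n}. P i ob) = 1" if "ob \<in> {1..m}" for ob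
    using sum_zero_one_le_1_cases[of "{1..n}" "\<lambda>i. P i ob"] entry_zero_one col_sum_le_1 that by auto
  have "q a c = 0 \<or> q a c = 1" if "a \<in> agents' n m" "c \<in> objects' n m" for a c
    using that entry_zero_one rows cols
    by (elim agents'_cases objects'_cases) auto
  then show ?thesis
    unfolding det_matching'_def using bistochastic'_assoc_matching[OF random_matching] by blast
qed

lemma agent_not_prefers_null:
  assumes "i \<in> {1..n}" "c' \<in> objects' n m" "q (Inl i) c' = 1"
  shows "\<not> strict (assoc_apref Pa Po (Inl i)) (Inr k) c'"
  using assms(2)
proof (cases rule: objects'_cases)
  case (object ob)
  then have "acceptable Pa Po i ob" using matched_acceptable assms(1,3) by simp
  then show ?thesis using object unfolding acceptable_def by (simp add: strict_def)
next
  case (null k')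
  then have "k' = i" using assoc_null_partner(1) assms(1,3) by blast
  with null show ?thesis by (simp add: strict_def)
qed

lemma object_not_prefers_dummy:
  assumes "ob \<in> {1..m}" "b \<in> agents' n m" "q b (Inl ob) = 1"
  shows "\<not> strict (assoc_opref Pa Po (Inl ob)) (Inr j) b"
  using assms(2)
proof (cases rule: agents'_cases)
  case (agent i)
  then have "acceptable Pa Po i ob" using matched_acceptable assms(1,3) by simp
  then show ?thesis using agent unfolding acceptable_def by (simp add: strict_def)
next
  case (dummy j')
  then have "ob = j'" using assoc_dummy_partner(1) assms(3) by blast
  with dummy show ?thesis by (simp add: strict_def)
qed

lemma dummy_with_object_not_prefers:
  assumes "j \<in> {1..m}" "q (Inr j) (Inl ob) = 1"
  shows "\<not> strict (assoc_apref Pa Po (Inr j)) c (Inl ob)"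
  using assoc_dummy_partner(1)[OF assms] by (cases c) (simp_all add: strict_def)

lemma null_with_agent_not_prefers:
  assumes "i \<in> {1..n}" "q (Inl i) (Inr k) = 1"
  shows "\<not> strict (assoc_opref Pa Po (Inr k)) a (Inl i)"
  using assoc_null_partner(1)[OF assms] by (cases a) (simp_all add: strict_def)

lemma agent_prefers_object_desires:
  assumes "i \<in> {1..n}" "ob \<in> {1..m}" "c' \<in> objects' n m" "q (Inl i) c' = 1"
    and "strict (assoc_apref Pa Po (Inl i)) (Inl ob) c'"
  shows "desires_object i ob"
  using assms(3)
proof (cases rule: objects'_cases)
  case (object ob')
  then have "P i ob' = 1" using assms(4) by simp
  moreover from this have "strict (Pa i) (Some ob') None"
    using matched_acceptable assms(1) object(2) unfolding acceptable_def by blast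
  moreover from this have "strict (Pa i) (Some ob) None \<and> \<not> Pa i (Some ob') (Some ob)"
    using assms(5) object by (simp add: strict_def split: if_splits)
  ultimately show ?thesis
    using matched_object_unique[OF assms(1) object(2)] unfolding desires_object_def by blast
next
  case (null k)
  then have "\<forall>ob'\<in>{1..m}. P i ob' = 0"
    using assoc_null_partner(2) assms(1,4) by blast
  then show ?thesis
    using assms(5) null unfolding desires_object_def by (simp add: strict_def)
qed

lemma object_prefers_agent_desires:
  assumes "ob \<in> {1..m}" "i \<in> {1..n}" "b \<in> agents' n m" "q b (Inl ob) = 1"
    and "strict (assoc_opref Pa Po (Inl ob)) (Inl i) b"
  shows "desires_agent ob i"
  using assms(3)
proof (cases rule: agents'_cases)
  case (agent i')
  then have "P i' ob = 1" using assms(4) by simp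
  moreover from this have "strict (Po ob) (Some i') None"
    using matched_acceptable assms(1) agent(2) unfolding acceptable_def by blast
  moreover from this have "strict (Po ob) (Some i) None \<and> \<not> Po ob (Some i') (Some i)"
    using assms(5) agent by (simp add: strict_def split: if_splits)
  ultimately show ?thesis
    using matched_agent_unique[OF agent(2) _ assms(1)] unfolding desires_agent_def by blast
next
  case (dummy j)
  then have "\<forall>i'\<in>{1..n}. P i' j = 0" "ob = j"
    using assoc_dummy_partner assms(4) by blast+
  then show ?thesis
    using assms(5) dummy unfolding desires_agent_def by (simp add: strict_def)
qed

lemma dummy_prefers_null_desires:
  assumes "j \<in> {1..m}" "i \<in> {1..n}" "k \<in> {1..n}" "P i j = 1"
    and "strict (assoc_apref Pa Po (Inr j)) (Inr k) (Inr i)"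
  shows "desires_agent j k"
proof -
  have "strict (Po j) (Some k) (Some i)" using assms(5) by (simp add: strict_def)
  moreover have "strict (Po j) (Some i) None"
    using matched_acceptable[OF assms(2,1,4)] unfolding acceptable_def by blast
  ultimately have "strict (Po j) (Some k) None"
    using weak_order_on_strict_trans[OF general_instance_object_order[OF gen_instance assms(1)]]
      assms(2,3) by blast
  then show ?thesis
    using \<open>strict (Po j) (Some k) (Some i)\<close> matched_agent_unique[OF assms(2) _ assms(1,4)]
    unfolding desires_agent_def strict_def by blast
qed

lemma null_prefers_dummy_desires:
  assumes "k \<in> {1..n}" "j \<in> {1..m}" "j' \<in> {1..m}" "P k j' = 1"
    and "strict (assoc_opref Pa Po (Inr k)) (Inr j) (Inr j')"
  shows "desires_object k j"
proof -
  have "strict (Pa k) (Some j) (Some j')" using assms(5) by (simp add: strict_def)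
  moreover have "strict (Pa k) (Some j') None"
    using matched_acceptable[OF assms(1,3,4)] unfolding acceptable_def by blast
  ultimately have "strict (Pa k) (Some j) None"
    using weak_order_on_strict_trans[OF general_instance_agent_order[OF gen_instance assms(1)]]
      assms(2,3) by blast
  then show ?thesis
    using \<open>strict (Pa k) (Some j) (Some j')\<close> matched_object_unique[OF assms(1,3) _ assms(4)]
    unfolding desires_object_def strict_def by blast
qed

lemma assoc_no_blocking_pair:
  assumes "a \<in> agents' n m" "b \<in> agents' n m" "c \<in> objects' n m" "c' \<in> objects' n m"
    and "q a c' = 1" "q b c = 1"
    and "strict (assoc_apref Pa Po a) c c'" "strict (assoc_opref Pa Po c) a b"
  shows False
  using assms(1)
proof (cases rule: agents'_cases)
  case (agent i)
  from assms(3) show False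
  proof (cases rule: objects'_cases)
    case (object ob)
    then show False
      using agent assms no_mutual_desire agent_prefers_object_desires object_prefers_agent_desires
      by blast
  next
    case (null k)
    then show False using agent assms agent_not_prefers_null by blast
  qed
next
  case (dummy j)
  from assms(4) show False
  proof (cases rule: objects'_cases)
    case (object ob')
    then show False using dummy assms dummy_with_object_not_prefers by blast
  next
    case (null i)
    then have matched: "P i j = 1" using dummy assms(5) by simp
    from assms(3) show False
    proof (cases rule: objects'_cases)
      case (object ob)
      then show False using dummy assms object_not_prefers_dummy by blast
    next
      case (null k)
      from assms(2) show False
      proof (cases rule: agents'_cases)
        case (agent i')
        then show False using null dummy assms null_with_agent_not_prefers by blast
      next
        case (dummy j')
        then have "P k j' = 1" using null assms(6) by simp
        then show False
          using \<open>a = Inr j\<close> \<open>j \<in> {1..m}\<close> \<open>c' = Inr i\<close> \<open>i \<in> {1..n}\<close> null dummy assms(7,8) matched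
            no_mutual_desire dummy_prefers_null_desires null_prefers_dummy_desires
          by blast
      qed
    qed
  qed
qed

theorem weakly_stable'_assoc: "weakly_stable' n m Pa Po q"
  unfolding weakly_stable'_def using det_matching'_assoc assoc_no_blocking_pair by blast

end

locale weakly_stable'_matching =
  fixes n m :: nat
    and Pa Po :: "nat \<Rightarrow> nat option \<Rightarrow> nat option \<Rightarrow> bool"
    and Q :: "nat + nat \<Rightarrow> nat + nat \<Rightarrow> real"
  assumes gen_instance: "general_instance n m Pa Po"
    and stable': "weakly_stable' n m Pa Po Q"
begin

abbreviation P :: "nat \<Rightarrow> nat \<Rightarrow> real" where
  "P \<equiv> \<lambda>i ob. Q (Inl i) (Inl ob)"

lemma entry_nonneg: "a \<in> agents' n m \<Longrightarrow> c \<in> objects' n m \<Longrightarrow> Q a c \<ge> 0"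
  using stable' unfolding weakly_stable'_def det_matching'_def bistochastic'_def by blast

lemma entry_zero_one: "\<forall>a\<in>agents' n m. \<forall>c\<in>objects' n m. Q a c = 0 \<or> Q a c = 1"
  using stable' unfolding weakly_stable'_def det_matching'_def by blast

lemma row_sum_eq_1: "a \<in> agents' n m \<Longrightarrow> (\<Sum>c\<in>objects' n m. Q a c) = 1"
  using stable' unfolding weakly_stable'_def det_matching'_def bistochastic'_def by blast

lemma col_sum_eq_1: "c \<in> objects' n m \<Longrightarrow> (\<Sum>a\<in>agents' n m. Q a c) = 1"
  using stable' unfolding weakly_stable'_def det_matching'_def bistochastic'_def by blast

lemma no_blocking_pair':
  "\<lbrakk>a \<in> agents' n m; b \<in> agents' n m; c \<in> objects' n m; c' \<in> objects' n m;
    Q a c' = 1; Q b c = 1; strict (assoc_apref Pa Po a) c c'; strict (assoc_opref Pa Po c) a b\<rbrakk>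
   \<Longrightarrow> False"
  using stable' unfolding weakly_stable'_def by blast

lemma obtain_object_partner:
  assumes "a \<in> agents' n m"
  obtains c where "c \<in> objects' n m" "Q a c = 1"
  using sum_zero_one_eq_1_obtain[of "objects' n m" "Q a"] entry_zero_one row_sum_eq_1 assms by auto

lemma obtain_agent_partner:
  assumes "c \<in> objects' n m"
  obtains a where "a \<in> agents' n m" "Q a c = 1"
  using sum_zero_one_eq_1_obtain[of "agents' n m" "\<lambda>a. Q a c"] entry_zero_one col_sum_eq_1 assms
  by auto

lemma object_partner_unique:
  "\<lbrakk>a \<in> agents' n m; c \<in> objects' n m; c' \<in> objects' n m; Q a c = 1; Q a c' = 1\<rbrakk> \<Longrightarrow> c' = c"
  by (rule sum_zero_one_le_1_unique[of "objects' n m" "Q a"]) (use entry_zero_one row_sum_eq_1 in auto)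

lemma agent_partner_unique:
  "\<lbrakk>a \<in> agents' n m; b \<in> agents' n m; c \<in> objects' n m; Q a c = 1; Q b c = 1\<rbrakk> \<Longrightarrow> b = a"
  by (rule sum_zero_one_le_1_unique[of "agents' n m" "\<lambda>a. Q a c"])
    (use entry_zero_one col_sum_eq_1 in auto)

lemma gen_det_matching_restriction: "gen_det_matching n m P"
  unfolding gen_det_matching_def gen_random_matching_def
proof (intro conjI ballI)
  fix i ob
  assume "i \<in> {1..n}" "ob \<in> {1..m}"
  then show "P i ob \<ge> 0" "P i ob = 0 \<or> P i ob = 1"
    using entry_nonneg entry_zero_one by simp_all
next
  fix i
  assume i: "i \<in> {1..n}"
  have "(\<Sum>k\<in>{1..n}. Q (Inl i) (Inr k)) \<ge> 0"
    using entry_nonneg i by (intro sum_nonneg) simp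
  then show "(\<Sum>ob\<in>{1..m}. P i ob) \<le> 1"
    using row_sum_eq_1[of "Inl i"] i by (simp add: sum_objects')
next
  fix ob
  assume ob: "ob \<in> {1..m}"
  have "(\<Sum>j\<in>{1..m}. Q (Inr j) (Inl ob)) \<ge> 0"
    using entry_nonneg ob by (intro sum_nonneg) simp
  then show "(\<Sum>i\<in>{1..n}. P i ob) \<le> 1"
    using col_sum_eq_1[of "Inl ob"] ob by (simp add: sum_agents')
qed

lemma restriction_agent_rational:
  assumes "i \<in> {1..n}" "ob \<in> {1..m}" "P i ob = 1"
  shows "\<not> strict (Pa i) None (Some ob)"
proof
  assume unacceptable: "strict (Pa i) None (Some ob)"
  obtain b where b: "b \<in> agents' n m" "Q b (Inr i) = 1"
    using obtain_agent_partner[of "Inr i"] assms(1) by auto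
  have "b \<noteq> Inl i"
    using object_partner_unique[of "Inl i" "Inl ob" "Inr i"] assms b(2) by auto
  with b(1) have "strict (assoc_opref Pa Po (Inr i)) (Inl i) b"
    by (cases rule: agents'_cases) (auto simp: strict_def first_rank_def)
  moreover have "strict (assoc_apref Pa Po (Inl i)) (Inr i) (Inl ob)"
    using unacceptable by (simp add: strict_def)
  ultimately show False
    using no_blocking_pair'[of "Inl i" b "Inr i" "Inl ob"] assms b by simp
qed

lemma restriction_object_rational:
  assumes "i \<in> {1..n}" "ob \<in> {1..m}" "P i ob = 1"
  shows "\<not> strict (Po ob) None (Some i)"
proof
  assume unacceptable: "strict (Po ob) None (Some i)"
  obtain c' where c': "c' \<in> objects' n m" "Q (Inr ob) c' = 1"
    using obtain_object_partner[of "Inr ob"] assms(2) by auto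
  have "c' \<noteq> Inl ob"
    using agent_partner_unique[of "Inl i" "Inr ob" "Inl ob"] assms c'(2) by auto
  with c'(1) have "strict (assoc_apref Pa Po (Inr ob)) (Inl ob) c'"
    by (cases rule: objects'_cases) (auto simp: strict_def first_rank_def)
  moreover have "strict (assoc_opref Pa Po (Inl ob)) (Inr ob) (Inl i)"
    using unacceptable by (simp add: strict_def)
  ultimately show False
    using no_blocking_pair'[of "Inr ob" "Inl i" "Inl ob" c'] assms c' by simp
qed

lemma indiv_rational_restriction: "indiv_rational n m Pa Po P"
  unfolding indiv_rational_def
proof (intro ballI impI)
  fix i ob
  assume i: "i \<in> {1..n}" and ob: "ob \<in> {1..m}"
    and "strict (Pa i) None (Some ob) \<or> strict (Po ob) None (Some i)"
  then have "P i ob \<noteq> 1"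
    using restriction_agent_rational restriction_object_rational by blast
  then show "P i ob = 0"
    using entry_zero_one i ob by (metis mem_agents'(1) mem_objects'(1))
qed

lemma agent_prefers_desired_object:
  assumes "i \<in> {1..n}" "ob \<in> {1..m}" "c' \<in> objects' n m" "Q (Inl i) c' = 1"
    and "strict (Pa i) (Some ob) None"
    and "\<forall>ob'\<in>{1..m}. Pa i (Some ob') (Some ob) \<longrightarrow> P i ob' = 0"
  shows "strict (assoc_apref Pa Po (Inl i)) (Inl ob) c'"
  using assms(3)
proof (cases rule: objects'_cases)
  case (object ob')
  then have "\<not> Pa i (Some ob') (Some ob)" using assms(4,6) by auto
  moreover from this have "Pa i (Some ob) (Some ob')"
    using general_instance_agent_order[OF gen_instance assms(1)] assms(2) object(2)
    unfolding weak_order_on_def by blast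
  ultimately show ?thesis using object assms(5) by (auto simp: strict_def)
next
  case (null k)
  then show ?thesis using assms(5) by (simp add: strict_def)
qed

lemma object_prefers_desired_agent:
  assumes "ob \<in> {1..m}" "i \<in> {1..n}" "b \<in> agents' n m" "Q b (Inl ob) = 1"
    and "strict (Po ob) (Some i) None"
    and "\<forall>j\<in>{1..n}. Po ob (Some j) (Some i) \<longrightarrow> P j ob = 0"
  shows "strict (assoc_opref Pa Po (Inl ob)) (Inl i) b"
  using assms(3)
proof (cases rule: agents'_cases)
  case (agent j)
  then have "\<not> Po ob (Some j) (Some i)" using assms(4,6) by auto
  moreover from this have "Po ob (Some i) (Some j)"
    using general_instance_object_order[OF gen_instance assms(1)] assms(2) agent(2)
    unfolding weak_order_on_def by blast
  ultimately show ?thesis using agent assms(5) by (auto simp: strict_def)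
next
  case (dummy j)
  then show ?thesis using assms(5) by (simp add: strict_def)
qed

lemma restriction_no_blocking_pair:
  assumes "i \<in> {1..n}" "ob \<in> {1..m}" "acceptable Pa Po i ob"
    and "(\<Sum>ob'\<in>{ob'\<in>{1..m}. Pa i (Some ob') (Some ob)}. P i ob') = 0"
    and "(\<Sum>j\<in>{j\<in>{1..n}. Po ob (Some j) (Some i)}. P j ob) = 0"
  shows False
proof -
  have agent: "\<forall>ob'\<in>{1..m}. Pa i (Some ob') (Some ob) \<longrightarrow> P i ob' = 0"
    using assms(1,4) entry_nonneg by (subst (asm) sum_nonneg_eq_0_iff) auto
  have object: "\<forall>j\<in>{1..n}. Po ob (Some j) (Some i) \<longrightarrow> P j ob = 0"
    using assms(2,5) entry_nonneg by (subst (asm) sum_nonneg_eq_0_iff) auto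
  obtain c' where c': "c' \<in> objects' n m" "Q (Inl i) c' = 1"
    using obtain_object_partner[of "Inl i"] assms(1) by auto
  obtain b where b: "b \<in> agents' n m" "Q b (Inl ob) = 1"
    using obtain_agent_partner[of "Inl ob"] assms(2) by auto
  have "strict (assoc_apref Pa Po (Inl i)) (Inl ob) c'"
    using agent_prefers_desired_object[OF assms(1,2) c' _ agent] assms(3)
    unfolding acceptable_def by blast
  moreover have "strict (assoc_opref Pa Po (Inl ob)) (Inl i) b"
    using object_prefers_desired_agent[OF assms(2,1) b _ object] assms(3)
    unfolding acceptable_def by blast
  ultimately show False
    using no_blocking_pair'[OF _ b(1) _ c'(1) c'(2) b(2)] assms(1,2) by simp
qed

theorem gen_weakly_stable_restriction: "gen_weakly_stable n m Pa Po P"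
  unfolding gen_weakly_stable_def
  using gen_det_matching_restriction indiv_rational_restriction restriction_no_blocking_pair
  by blast

end

lemma ex_post_weakly_stable'_assoc_matching:
  fixes K :: nat
  assumes "general_instance n m Pa Po" "gen_random_matching n m p"
    and stable: "\<forall>k<K. 0 < lam k \<and> gen_weakly_stable n m Pa Po (Ps k)"
    and weights: "(\<Sum>k<K. lam k) = 1"
    and convex: "\<forall>i\<in>{1..n}. \<forall>ob\<in>{1..m}. p i ob = (\<Sum>k<K. lam k * Ps k i ob)"
  shows "ex_post_weakly_stable' n m Pa Po (assoc_matching n m p)"
  unfolding ex_post_weakly_stable'_def
proof (intro conjI exI)
  show "\<forall>k<K. 0 < lam k \<and> weakly_stable' n m Pa Po (assoc_matching n m (Ps k))"
    using stable gen_weakly_stable_matching.weakly_stable'_assoc assms(1)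
    unfolding gen_weakly_stable_matching_def by blast
qed (use bistochastic'_assoc_matching[OF assms(2)] weights
    assoc_matching_convex_combination[OF weights convex] in auto)

lemma gen_weakly_stable_decomposition_of_assoc:
  assumes "general_instance n m Pa Po" "ex_post_weakly_stable' n m Pa Po (assoc_matching n m p)"
  shows "\<exists>(K::nat) lam Ps. (\<forall>k<K. 0 < lam k \<and> lam k \<le> 1 \<and> gen_weakly_stable n m Pa Po (Ps k)) \<and>
           (\<Sum>k<K. lam k) = 1 \<and> (\<forall>i\<in>{1..n}. \<forall>ob\<in>{1..m}. p i ob = (\<Sum>k<K. lam k * Ps k i ob))"
proof -
  obtain K :: nat and lam Qs where
    stable: "\<forall>k<K. 0 < lam k \<and> weakly_stable' n m Pa Po (Qs k)"
    and weights: "(\<Sum>k<K. lam k) = 1"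
    and convex: "\<forall>a\<in>agents' n m. \<forall>c\<in>objects' n m. assoc_matching n m p a c = (\<Sum>k<K. lam k * Qs k a c)"
    using assms(2) unfolding ex_post_weakly_stable'_def by blast
  show ?thesis
  proof (intro conjI exI)
    show "\<forall>k<K. 0 < lam k \<and> lam k \<le> 1 \<and> gen_weakly_stable n m Pa Po (\<lambda>i ob. Qs k (Inl i) (Inl ob))"
      using stable positive_weight_le_1[of K lam] weights
        weakly_stable'_matching.gen_weakly_stable_restriction assms(1)
      unfolding weakly_stable'_matching_def by blast
    show "\<forall>i\<in>{1..n}. \<forall>ob\<in>{1..m}. p i ob = (\<Sum>k<K. lam k * Qs k (Inl i) (Inl ob))"
      using convex by (metis assoc_matching_simps(1) mem_agents'(1) mem_objects'(1))
  qed (rule weights)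
qed

theorem proposition26:
  fixes n m :: nat
    and Pa Po :: "nat \<Rightarrow> nat option \<Rightarrow> nat option \<Rightarrow> bool"
    and p :: "nat \<Rightarrow> nat \<Rightarrow> real"
  assumes "general_instance n m Pa Po"
    and "gen_random_matching n m p"
  shows "gen_ex_post_weakly_stable n m Pa Po p \<longleftrightarrow>
           ex_post_weakly_stable' n m Pa Po (assoc_matching n m p) \<and> non_wasteful n m Pa Po p"
proof
  assume "gen_ex_post_weakly_stable n m Pa Po p"
  then obtain K :: nat and lam Ps where
    "\<forall>k<K. 0 < lam k \<and> lam k \<le> 1 \<and> gen_weakly_stable n m Pa Po (Ps k)"
    "(\<Sum>k<K. lam k) = 1" "\<forall>i\<in>{1..n}. \<forall>ob\<in>{1..m}. p i ob = (\<Sum>k<K. lam k * Ps k i ob)"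
    "non_wasteful n m Pa Po p"
    unfolding gen_ex_post_weakly_stable_def by blast
  then show "ex_post_weakly_stable' n m Pa Po (assoc_matching n m p) \<and> non_wasteful n m Pa Po p"
    using ex_post_weakly_stable'_assoc_matching[OF assms, of K lam Ps] by blast
next
  assume "ex_post_weakly_stable' n m Pa Po (assoc_matching n m p) \<and> non_wasteful n m Pa Po p"
  then show "gen_ex_post_weakly_stable n m Pa Po p"
    unfolding gen_ex_post_weakly_stable_def
    using gen_weakly_stable_decomposition_of_assoc[OF assms(1)] by blast
qed

end
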